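(* In the setting below, $$N=\lim_{t\to\infty}(S+tP)^{-1}=\frac1\alpha Y-\frac{\ell}{\alpha(\alpha+\ell\gamma)}\,yy^\top.$$
   Context: Let $n\ge3$, $\ell>0$, $\alpha\ge(n-2)\ell$, $S=\alpha I_n+\ell\mathbf{1}_n\mathbf{1}_n^\top$. For a real matrix $P$, $\Delta_i(P)=|P_{ii}|-\sum_{j\ne i}|P_{ij}|$. A signless Laplacian is a real symmetric $n\times n$ matrix $P$ with $P_{ij}\in\{0,1\}$ for $i\ne j$, $P_{ii}\ge0$, and $\Delta_i(P)\in\{0,2\}$ for all $i$; its graph $G$ has vertex set $\{1,\dots,n\}$, an edge $\{i,j\}$ ($i\ne j$) whenever $P_{ij}=1$, and a self-loop $\{i,i\}$ whenever $\Delta_i(P)=2$ (graphs with self-loops are not bipartite). Relabel vertices so that the bipartite components $G_1,\dots,G_r$ come first, each occupying consecutive vertices with one bipartition class (size $p_i$) listed first and then the other (size $q_i$), and the remaining $s=n-\sum_{i=1}^r(p_i+q_i)$ vertices lie in non-bipartite components. Define $\gamma=\sum_{i=1}^r\frac{(p_i-q_i)^2}{p_i+q_i}$, $$y^\top=\Big(\tfrac{p_1-q_1}{p_1+q_1}(\mathbf{1}_{p_1}^\top,-\mathbf{1}_{q_1}^\top),\dots,\tfrac{p_r-q_r}{p_r+q_r}(\mathbf{1}_{p_r}^\top,-\mathbf{1}_{q_r}^\top),\,0\cdot\mathbf{1}_s^\top\Big),$$ and $Y$ the block-diagonal matrix with diagonal blocks $\frac{1}{p_i+q_i}\begin{pmatrix}\mathbf{1}_{p_i}\mathbf{1}_{p_i}^\top&-\mathbf{1}_{p_i}\mathbf{1}_{q_i}^\top\\-\mathbf{1}_{q_i}\mathbf{1}_{p_i}^\top&\mathbf{1}_{q_i}\mathbf{1}_{q_i}^\top\end{pmatrix}$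 for $i=1,\dots,r$, followed by the $s\times s$ zero block. *)

theory Defs
  imports Complex_Main "Jordan_Normal_Form.Matrix" "Jordan_Normal_Form.Gauss_Jordan_Elimination"
begin

text \<open>Matrices are n x n matrices of Jordan_Normal_Form, indices 0..n-1
  (vertex i of the paper is index i-1 here).\<close>

definition Delta :: "real mat \<Rightarrow> nat \<Rightarrow> real" where
  "Delta P i = \<bar>P $$ (i,i)\<bar> - (\<Sum>j\<in>{0..<dim_col P} - {i}. \<bar>P $$ (i,j)\<bar>)"

definition signless_laplacian :: "nat \<Rightarrow> real mat \<Rightarrow> bool" where
  "signless_laplacian n P \<longleftrightarrow> P \<in> carrier_mat n n \<and> P\<^sup>T = P \<and>
     (\<forall>i<n. \<forall>j<n. i \<noteq> j \<longrightarrow> P $$ (i,j) \<in> {0,1}) \<and>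
     (\<forall>i<n. P $$ (i,i) \<ge> 0) \<and> (\<forall>i<n. Delta P i \<in> {0,2})"

definition gadj :: "real mat \<Rightarrow> nat \<Rightarrow> nat \<Rightarrow> bool" where
  "gadj P i j \<longleftrightarrow> i < dim_row P \<and> j < dim_row P \<and> i \<noteq> j \<and> P $$ (i,j) = 1"

definition gloop :: "real mat \<Rightarrow> nat \<Rightarrow> bool" where
  "gloop P i \<longleftrightarrow> i < dim_row P \<and> Delta P i = 2"

definition gcomp :: "real mat \<Rightarrow> nat \<Rightarrow> nat set" where
  "gcomp P i = {j. j < dim_row P \<and> (gadj P)\<^sup>*\<^sup>* i j}"

definition bipartite_on :: "real mat \<Rightarrow> nat set \<Rightarrow> bool" where
  "bipartite_on P C \<longleftrightarrow> (\<forall>i\<in>C. \<not> gloop P i) \<and>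
     (\<exists>A. A \<subseteq> C \<and> (\<forall>i\<in>C. \<forall>j\<in>C. gadj P i j \<longrightarrow> (i \<in> A \<longleftrightarrow> j \<notin> A)))"

definition off :: "(nat \<Rightarrow> nat) \<Rightarrow> (nat \<Rightarrow> nat) \<Rightarrow> nat \<Rightarrow> nat" where
  "off p q k = (\<Sum>m<k. p m + q m)"

definition blk :: "(nat \<Rightarrow> nat) \<Rightarrow> (nat \<Rightarrow> nat) \<Rightarrow> nat \<Rightarrow> nat set" where
  "blk p q k = {off p q k ..< off p q k + p k + q k}"

text \<open>The labelling hypothesis: the bipartite components of G are exactly the blocks
  G_1..G_r, each listed with its class of size p_k first, then the class of size q_k;
  all remaining vertices lie in non-bipartite components.\<close>
definition bip_labelled :: "nat \<Rightarrow> real mat \<Rightarrow> nat \<Rightarrow> (nat \<Rightarrow> nat) \<Rightarrow> (nat \<Rightarrow> nat) \<Rightarrow> bool" where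
  "bip_labelled n P r p q \<longleftrightarrow> off p q r \<le> n \<and>
     (\<forall>k<r. p k + q k \<ge> 1 \<and>
        (\<forall>i\<in>blk p q k. gcomp P i = blk p q k) \<and>
        (\<forall>i\<in>blk p q k. \<not> gloop P i) \<and>
        (\<forall>i\<in>blk p q k. \<forall>j\<in>blk p q k. gadj P i j \<longrightarrow>
            (i < off p q k + p k \<longleftrightarrow> \<not> j < off p q k + p k))) \<and>
     (\<forall>i. off p q r \<le> i \<and> i < n \<longrightarrow> \<not> bipartite_on P (gcomp P i))"

definition gam :: "nat \<Rightarrow> (nat \<Rightarrow> nat) \<Rightarrow> (nat \<Rightarrow> nat) \<Rightarrow> real" where
  "gam r p q = (\<Sum>k<r. (real (p k) - real (q k))^2 / (real (p k) + real (q k)))"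

definition yv :: "nat \<Rightarrow> (nat \<Rightarrow> nat) \<Rightarrow> (nat \<Rightarrow> nat) \<Rightarrow> nat \<Rightarrow> real" where
  "yv r p q i = (\<Sum>k<r. if i \<in> blk p q k then
       (real (p k) - real (q k)) / (real (p k) + real (q k)) *
       (if i < off p q k + p k then 1 else -1) else 0)"

definition Ymat :: "nat \<Rightarrow> nat \<Rightarrow> (nat \<Rightarrow> nat) \<Rightarrow> (nat \<Rightarrow> nat) \<Rightarrow> real mat" where
  "Ymat n r p q = mat n n (\<lambda>(i,j). \<Sum>k<r. if i \<in> blk p q k \<and> j \<in> blk p q k then
       (if (i < off p q k + p k) = (j < off p q k + p k) then 1 else -1)
         / (real (p k) + real (q k)) else 0)"

definition yyT :: "nat \<Rightarrow> nat \<Rightarrow> (nat \<Rightarrow> nat) \<Rightarrow> (nat \<Rightarrow> nat) \<Rightarrow> real mat" where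
  "yyT n r p q = mat n n (\<lambda>(i,j). yv r p q i * yv r p q j)"

end

theory Submission
  imports Defs "Jordan_Normal_Form.Determinant"
begin

(* The quadratic form of P is a sum of squares (x_i + x_j)^2 over edges and x_i^2 over
   loops, so P is positive semidefinite, and its kernel is spanned by the signed indicator
   vectors of the bipartite components.  Y is the orthogonal projector onto this kernel:
   PY = YP = 0, Y^2 = Y and P + Y is invertible.  Since S >= alpha I, the form of S + tP
   (t >= 0) dominates alpha |x|^2, so B(t) = (S + tP)^-1 exists with entries bounded by 1/alpha.
   The candidate N satisfies PN = 0 and Y S N = Y; the latter says that I - SN has no
   component in ker P, hence I - SN = PW for some W.  Then B(t) S N = N and
       t (B(t) - N) = W - B(t) S W,
   whose right-hand side is bounded, so B(t) -> N at rate 1/t. *)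

lemma mat_eq_sub:
  assumes A: "(A :: real mat) \<in> carrier_mat n n" and B: "B \<in> carrier_mat n n" and e: "A + B = C"
  shows "B = C - A"
proof (rule eq_matI)
  fix i j assume "i < dim_row (C - A)" "j < dim_col (C - A)"
  then have i: "i < n" and j: "j < n" using A by auto
  have "C $$ (i,j) = A $$ (i,j) + B $$ (i,j)" unfolding e[symmetric] using A B i j by simp
  then show "B $$ (i,j) = (C - A) $$ (i,j)" using A i j by simp
qed (use A B e in auto)

lemma mat_mult_entry:
  assumes "A \<in> carrier_mat n m" "B \<in> carrier_mat m k" "i < n" "j < k"
  shows "(A * B) $$ (i,j) = (\<Sum>a<m. A $$ (i,a) * B $$ (a,j))"
  using assms by (auto simp: scalar_prod_def lessThan_atLeast0 intro!: sum.cong)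

lemma mat_mult_vec_entry:
  assumes "A \<in> carrier_mat n m" "v \<in> carrier_vec m" "i < n"
  shows "(A *\<^sub>v v) $ i = (\<Sum>a<m. A $$ (i,a) * v $ a)"
  using assms by (auto simp: scalar_prod_def lessThan_atLeast0 intro!: sum.cong)

lemma mult_smult_diff_mat:
  fixes X A B :: "real mat"
  assumes X: "X \<in> carrier_mat m n" and A: "A \<in> carrier_mat n k" and B: "B \<in> carrier_mat n k"
  shows "X * (a \<cdot>\<^sub>m A - b \<cdot>\<^sub>m B) = a \<cdot>\<^sub>m (X * A) - b \<cdot>\<^sub>m (X * B)"
proof -
  have "X * (a \<cdot>\<^sub>m A - b \<cdot>\<^sub>m B) = X * (a \<cdot>\<^sub>m A) - X * (b \<cdot>\<^sub>m B)"
    by (rule mult_minus_distrib_mat[OF X]) (use A B in auto)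
  then show ?thesis using mult_smult_distrib[OF X A] mult_smult_distrib[OF X B] by simp
qed

lemma inverse_if_trivial_kernel:
  assumes A: "(A :: real mat) \<in> carrier_mat n n"
    and inj: "\<And>x. (\<And>i. i < n \<Longrightarrow> (\<Sum>j<n. A $$ (i,j) * x j) = 0) \<Longrightarrow> (\<And>i. i < n \<Longrightarrow> x i = 0)"
  shows "\<exists>B. mat_inverse A = Some B \<and> A * B = 1\<^sub>m n \<and> B * A = 1\<^sub>m n \<and> B \<in> carrier_mat n n"
proof -
  have "det A \<noteq> 0"
  proof
    assume "det A = 0"
    then obtain v where v: "v \<in> carrier_vec n" "v \<noteq> 0\<^sub>v n" "A *\<^sub>v v = 0\<^sub>v n"
      using det_0_iff_vec_prod_zero[OF A] by auto
    have "\<And>i. i < n \<Longrightarrow> (\<Sum>j<n. A $$ (i,j) * v $ j) = 0"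
      using v mat_mult_vec_entry[OF A v(1)] by (metis index_zero_vec(1))
    then have "\<And>i. i < n \<Longrightarrow> v $ i = 0" by (rule inj)
    then have "v = 0\<^sub>v n" using v(1) by (intro eq_vecI) auto
    with v(2) show False by simp
  qed
  then have U: "A \<in> Units (ring_mat TYPE(real) n n)" by (rule det_non_zero_imp_unit[OF A])
  show ?thesis
  proof (cases "mat_inverse A")
    case None
    then show ?thesis using mat_inverse(1)[OF A None, of n] U by simp
  next
    case (Some B)
    then show ?thesis using mat_inverse(2)[OF A Some] by auto
  qed
qed

definition qf :: "nat \<Rightarrow> real mat \<Rightarrow> (nat \<Rightarrow> real) \<Rightarrow> real" where
  "qf n A x = (\<Sum>i<n. \<Sum>j<n. A $$ (i,j) * x i * x j)"

lemma qf_mult: "qf n A x = (\<Sum>i<n. x i * (\<Sum>j<n. A $$ (i,j) * x j))"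
  unfolding qf_def by (simp add: sum_distrib_left mult_ac)

lemma qf_add: assumes "A \<in> carrier_mat n n" "B \<in> carrier_mat n n"
  shows "qf n (A + B) x = qf n A x + qf n B x"
  unfolding qf_def using assms by (simp add: sum.distrib[symmetric] algebra_simps)

lemma qf_smult: assumes "A \<in> carrier_mat n n"
  shows "qf n (c \<cdot>\<^sub>m A) x = c * qf n A x"
  unfolding qf_def using assms by (simp add: sum_distrib_left mult_ac)

lemma qf_one: "qf n (1\<^sub>m n) x = (\<Sum>i<n. (x i)^2)"
proof -
  have "qf n (1\<^sub>m n) x = (\<Sum>i<n. \<Sum>j<n. if i = j then x i * x j else 0)"
    unfolding qf_def by (intro sum.cong refl) simp
  then show ?thesis by (simp add: power2_eq_square)
qed

lemma qf_J: "qf n (mat n n (\<lambda>_. 1)) x = (\<Sum>i<n. x i)^2"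
  unfolding qf_def by (simp add: power2_eq_square sum_product mult_ac)

lemma qf_diag_split:
  "qf n A x = (\<Sum>i<n. A $$ (i,i) * (x i)^2) + (\<Sum>i<n. \<Sum>j<n. if i \<noteq> j then A $$ (i,j) * x i * x j else 0)"
proof -
  have "(\<Sum>j<n. A $$ (i,j) * x i * x j)
      = A $$ (i,i) * (x i)^2 + (\<Sum>j<n. if i \<noteq> j then A $$ (i,j) * x i * x j else 0)" if i: "i < n" for i
  proof -
    have "(\<Sum>j<n. A $$ (i,j) * x i * x j) = (\<Sum>j<n. (if j = i then A $$ (i,i) * (x i)^2 else 0)
        + (if i \<noteq> j then A $$ (i,j) * x i * x j else 0))"
      by (intro sum.cong refl) (auto simp: power2_eq_square)
    then show ?thesis using i by (simp add: sum.distrib)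
  qed
  then show ?thesis unfolding qf_def sum.distrib[symmetric] by (intro sum.cong refl) simp
qed

text \<open>If A is coercive (x^T A x \<ge> c |x|^2 with c > 0) and Ax is the j-th unit vector, then every
  entry of x is bounded by 1/c: c |x|^2 \<le> x^T A x = x_j \<le> |x|.\<close>
lemma coercive_unit_solution_bound:
  assumes c: "c > 0" and pd: "qf n A x \<ge> c * (\<Sum>i<n. (x i)^2)"
    and j: "j < n" and Ax: "\<And>k. k < n \<Longrightarrow> (\<Sum>a<n. A $$ (k,a) * x a) = (if k = j then 1 else 0)"
    and i: "i < n"
  shows "\<bar>x i\<bar> \<le> 1 / c"
proof -
  have "qf n A x = (\<Sum>k<n. x k * (if k = j then 1 else 0))"
    unfolding qf_mult using Ax by simp
  also have "\<dots> = x j" using j by (simp add: if_distrib cong: if_cong)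
  finally have q: "qf n A x = x j" .
  have le: "(x a)^2 \<le> (\<Sum>i<n. (x i)^2)" if "a < n" for a
    using that by (intro member_le_sum) auto
  have xj: "c * (x j)^2 \<le> \<bar>x j\<bar>" using pd q le[OF j] c
    by (smt (verit, best) mult_left_mono)
  have xj2: "\<bar>x j\<bar> \<le> 1 / c"
  proof (cases "x j = 0")
    case True then show ?thesis using c by simp
  next
    case False
    then have "c * \<bar>x j\<bar> * \<bar>x j\<bar> \<le> 1 * \<bar>x j\<bar>"
      using xj by (simp add: power2_eq_square abs_mult_self_eq mult.assoc)
    then have "c * \<bar>x j\<bar> \<le> 1" using False by (simp add: mult_le_cancel_right)
    then show ?thesis using c by (simp add: field_simps)
  qed
  have "c * (x i)^2 \<le> 1 / c" using pd q le[OF i] c xj2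
    by (smt (verit, best) mult_left_mono)
  then have "(x i)^2 \<le> (1/c)^2" using c by (simp add: field_simps power2_eq_square)
  then show ?thesis using c by (metis abs_le_square_iff abs_of_pos zero_less_divide_1_iff)
qed

text \<open>Hence a coercive matrix is invertible, and all entries of its inverse are bounded by 1/c
  (apply the previous lemma to the columns of the inverse).\<close>
lemma coercive_inverse:
  assumes A: "(A :: real mat) \<in> carrier_mat n n" and c: "c > 0"
    and pd: "\<And>x. qf n A x \<ge> c * (\<Sum>i<n. (x i)^2)"
  shows "\<exists>B. mat_inverse A = Some B \<and> A * B = 1\<^sub>m n \<and> B * A = 1\<^sub>m n \<and> B \<in> carrier_mat n n
            \<and> (\<forall>i<n. \<forall>j<n. \<bar>B $$ (i,j)\<bar> \<le> 1 / c)"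
proof -
  have "\<exists>B. mat_inverse A = Some B \<and> A * B = 1\<^sub>m n \<and> B * A = 1\<^sub>m n \<and> B \<in> carrier_mat n n"
  proof (rule inverse_if_trivial_kernel[OF A])
    fix x assume h: "\<And>i. i < n \<Longrightarrow> (\<Sum>j<n. A $$ (i,j) * x j) = 0"
    have "qf n A x = 0" unfolding qf_mult using h by simp
    then have "c * (\<Sum>i<n. (x i)^2) \<le> 0" using pd[of x] by simp
    then have s0: "(\<Sum>i<n. (x i)^2) = 0"
      using c by (metis mult_le_0_iff not_less order_antisym sum_nonneg zero_le_power2)
    fix i assume i: "i < n"
    from s0 have "(x i)^2 = 0" using i by (simp add: sum_nonneg_eq_0_iff)
    then show "x i = 0" by simp
  qed
  then obtain B where B: "mat_inverse A = Some B" "A * B = 1\<^sub>m n" "B * A = 1\<^sub>m n" "B \<in> carrier_mat n n"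
    by blast
  have "\<bar>B $$ (i,j)\<bar> \<le> 1 / c" if i: "i < n" and j: "j < n" for i j
  proof (rule coercive_unit_solution_bound[OF c pd j _ i])
    fix k assume k: "k < n"
    have "(A * B) $$ (k,j) = (\<Sum>a<n. A $$ (k,a) * B $$ (a,j))"
      by (rule mat_mult_entry[OF A B(4) k j])
    then show "(\<Sum>a<n. A $$ (k,a) * B $$ (a,j)) = (if k = j then 1 else 0)" using B(2) k j by simp
  qed
  then show ?thesis using B by blast
qed

lemma resolvent_error_identity:
  fixes S P N W B :: "real mat" and t :: real
  assumes S: "S \<in> carrier_mat n n" and P: "P \<in> carrier_mat n n"
    and N: "N \<in> carrier_mat n n" and W: "W \<in> carrier_mat n n" and B: "B \<in> carrier_mat n n"
    and PN: "P * N = 0\<^sub>m n n" and PW: "P * W = 1\<^sub>m n - S * N"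
    and BM: "B * (S + t \<cdot>\<^sub>m P) = 1\<^sub>m n"
  shows "t \<cdot>\<^sub>m (B - N) = W - B * (S * W)"
proof -
  have M: "S + t \<cdot>\<^sub>m P \<in> carrier_mat n n" using S P by simp
  have SN: "S * N \<in> carrier_mat n n" using S N by simp
  have BP: "B * P \<in> carrier_mat n n" and BS: "B * S \<in> carrier_mat n n" using B P S by auto
  have "(S + t \<cdot>\<^sub>m P) * N = S * N + t \<cdot>\<^sub>m (P * N)"
    using S P N by (simp add: add_mult_distrib_mat mult_smult_assoc_mat)
  then have MN: "(S + t \<cdot>\<^sub>m P) * N = S * N" using PN SN by simp
  have BSN: "B * (S * N) = N"
    using assoc_mult_mat[OF B M N] BM MN N by simp
  have BPW: "(B * P) * W = B - N"
    using assoc_mult_mat[OF B P W] PW mult_minus_distrib_mat[OF B one_carrier_mat SN] BSN B by simp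
  have "B * S + t \<cdot>\<^sub>m (B * P) = 1\<^sub>m n"
    using BM mult_add_distrib_mat[OF B S] mult_smult_distrib[OF B P] P by simp
  from mat_eq_sub[OF BS _ this] have tBP: "t \<cdot>\<^sub>m (B * P) = 1\<^sub>m n - B * S"
    using BP by simp
  have "t \<cdot>\<^sub>m (B - N) = (t \<cdot>\<^sub>m (B * P)) * W"
    using BPW mult_smult_assoc_mat[OF BP W] by simp
  also have "\<dots> = W - (B * S) * W"
    unfolding tBP using minus_mult_distrib_mat[OF one_carrier_mat BS W] W by simp
  also have "(B * S) * W = B * (S * W)" by (rule assoc_mult_mat[OF B S W])
  finally show ?thesis .
qed

lemma resolvent_limit:
  fixes S P N W :: "real mat" and B :: "real \<Rightarrow> real mat" and K :: real
  assumes S: "S \<in> carrier_mat n n" and P: "P \<in> carrier_mat n n"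
    and N: "N \<in> carrier_mat n n" and W: "W \<in> carrier_mat n n"
    and PN: "P * N = 0\<^sub>m n n" and PW: "P * W = 1\<^sub>m n - S * N"
    and inv: "\<forall>\<^sub>F t in at_top. B t \<in> carrier_mat n n \<and> B t * (S + t \<cdot>\<^sub>m P) = 1\<^sub>m n \<and>
                (\<forall>i<n. \<forall>j<n. \<bar>B t $$ (i,j)\<bar> \<le> K)"
    and i: "i < n" and j: "j < n"
  shows "((\<lambda>t. B t $$ (i,j)) \<longlongrightarrow> N $$ (i,j)) at_top"
proof -
  define SW where "SW = S * W"
  have SW: "SW \<in> carrier_mat n n" unfolding SW_def using S W by simp
  define C where "C = \<bar>W $$ (i,j)\<bar> + (\<Sum>a<n. K * \<bar>SW $$ (a,j)\<bar>)"
  have bound: "\<bar>B t $$ (i,j) - N $$ (i,j)\<bar> \<le> C / t"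
    if t: "t > 0" and Bt: "B t \<in> carrier_mat n n" "B t * (S + t \<cdot>\<^sub>m P) = 1\<^sub>m n"
      and K: "\<forall>i<n. \<forall>j<n. \<bar>B t $$ (i,j)\<bar> \<le> K" for t
  proof -
    have "\<bar>(B t * SW) $$ (i,j)\<bar> \<le> (\<Sum>a<n. \<bar>B t $$ (i,a) * SW $$ (a,j)\<bar>)"
      unfolding mat_mult_entry[OF Bt(1) SW i j] by (rule sum_abs)
    also have "\<dots> \<le> (\<Sum>a<n. K * \<bar>SW $$ (a,j)\<bar>)"
      using K i by (intro sum_mono) (simp add: abs_mult mult_right_mono)
    finally have BSW: "\<bar>(B t * SW) $$ (i,j)\<bar> \<le> (\<Sum>a<n. K * \<bar>SW $$ (a,j)\<bar>)" .
    have err: "t * (B t $$ (i,j) - N $$ (i,j)) = W $$ (i,j) - (B t * SW) $$ (i,j)"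
      using arg_cong[OF resolvent_error_identity[OF S P N W Bt(1) PN PW Bt(2)], of "\<lambda>M. M $$ (i,j)"]
        i j Bt(1) N W SW unfolding SW_def by simp
    have "t * \<bar>B t $$ (i,j) - N $$ (i,j)\<bar> = \<bar>t * (B t $$ (i,j) - N $$ (i,j))\<bar>"
      using t by (simp add: abs_mult)
    also have "\<dots> = \<bar>W $$ (i,j) - (B t * SW) $$ (i,j)\<bar>" unfolding err ..
    also have "\<dots> \<le> \<bar>W $$ (i,j)\<bar> + \<bar>(B t * SW) $$ (i,j)\<bar>" by (rule abs_triangle_ineq4)
    also have "\<dots> \<le> C" unfolding C_def using BSW by simp
    finally have "t * \<bar>B t $$ (i,j) - N $$ (i,j)\<bar> \<le> C" .
    then show ?thesis using t by (simp add: field_simps)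
  qed
  have C0: "((\<lambda>t. C / t) \<longlongrightarrow> 0) at_top"
    by (rule tendsto_divide_0[OF tendsto_const filterlim_at_top_imp_at_infinity[OF filterlim_ident]])
  have "\<forall>\<^sub>F t in at_top. norm (B t $$ (i,j) - N $$ (i,j)) \<le> norm (C / t) * 1"
    using inv eventually_gt_at_top[of "0::real"]
  proof eventually_elim
    case (elim t)
    then have "\<bar>B t $$ (i,j) - N $$ (i,j)\<bar> \<le> C / t" using bound by blast
    then show ?case by (metis abs_ge_self mult_1_right order_trans real_norm_def)
  qed
  with C0 have "((\<lambda>t. B t $$ (i,j) - N $$ (i,j)) \<longlongrightarrow> 0) at_top"
    by (rule tendsto_0_le)
  then show ?thesis by (rule LIM_zero_cancel)
qed

lemma solve_modulo_projection:
  fixes P Y Q A :: "real mat"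
  assumes P: "P \<in> carrier_mat n n" and Y: "Y \<in> carrier_mat n n"
    and Q: "Q \<in> carrier_mat n n" and A: "A \<in> carrier_mat n n"
    and YP: "Y * P = 0\<^sub>m n n" and YY: "Y * Y = Y"
    and inv: "(P + Y) * Q = 1\<^sub>m n" and YA: "Y * A = 0\<^sub>m n n"
  shows "P * (Q * A) = A"
proof -
  define W where "W = Q * A"
  have W: "W \<in> carrier_mat n n" unfolding W_def using Q A by simp
  have PW: "P * W \<in> carrier_mat n n" and YW: "Y * W \<in> carrier_mat n n" using P Y W by auto
  have "(P + Y) * W = ((P + Y) * Q) * A"
    unfolding W_def by (rule assoc_mult_mat[symmetric]) (use P Y Q A in auto)
  then have sum: "P * W + Y * W = A"
    using add_mult_distrib_mat[OF P Y W] inv A by simp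
  have "Y * (P * W) = 0\<^sub>m n n"
    using assoc_mult_mat[OF Y P W] YP W by simp
  moreover have "Y * (Y * W) = Y * W"
    using assoc_mult_mat[OF Y Y W] YY by simp
  ultimately have "Y * A = Y * W"
    using mult_add_distrib_mat[OF Y PW YW] sum YW by simp
  then have "Y * W = 0\<^sub>m n n" using YA by simp
  then show ?thesis using sum PW unfolding W_def[symmetric] by simp
qed

lemma candidate_in_kernel:
  fixes P Y J :: "real mat" and \<alpha> c :: real
  assumes P: "P \<in> carrier_mat n n" and Y: "Y \<in> carrier_mat n n" and J: "J \<in> carrier_mat n n"
    and PY: "P * Y = 0\<^sub>m n n"
  shows "P * ((1 / \<alpha>) \<cdot>\<^sub>m Y - c \<cdot>\<^sub>m (Y * J * Y)) = 0\<^sub>m n n"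
proof -
  have YJY: "Y * J * Y \<in> carrier_mat n n" using Y J by simp
  have JY: "J * Y \<in> carrier_mat n n" using J Y by simp
  have "P * (Y * J * Y) = P * (Y * (J * Y))" using assoc_mult_mat[OF Y J Y] by simp
  also have "\<dots> = (P * Y) * (J * Y)" by (rule assoc_mult_mat[OF P Y JY, symmetric])
  finally have PZ: "P * (Y * J * Y) = 0\<^sub>m n n" using PY J Y by simp
  show ?thesis
    unfolding mult_smult_diff_mat[OF P Y YJY] PY PZ by (intro eq_matI) auto
qed

lemma projection_fixes_candidate:
  fixes Y J :: "real mat" and \<alpha> l \<gamma> :: real
  assumes Y: "Y \<in> carrier_mat n n" and J: "J \<in> carrier_mat n n"
    and YY: "Y * Y = Y" and JYJ: "J * Y * J = \<gamma> \<cdot>\<^sub>m J"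
    and \<alpha>: "\<alpha> \<noteq> 0" and den: "\<alpha> + l * \<gamma> \<noteq> 0"
  defines "c \<equiv> l / (\<alpha> * (\<alpha> + l * \<gamma>))"
  shows "Y * ((\<alpha> \<cdot>\<^sub>m 1\<^sub>m n + l \<cdot>\<^sub>m J) * ((1 / \<alpha>) \<cdot>\<^sub>m Y - c \<cdot>\<^sub>m (Y * J * Y))) = Y"
proof -
  define Z where "Z = Y * J * Y"
  define S where "S = \<alpha> \<cdot>\<^sub>m 1\<^sub>m n + l \<cdot>\<^sub>m J"
  define N where "N = (1 / \<alpha>) \<cdot>\<^sub>m Y - c \<cdot>\<^sub>m Z"
  have JY: "J * Y \<in> carrier_mat n n" and YJ: "Y * J \<in> carrier_mat n n" using Y J by auto
  have Z: "Z \<in> carrier_mat n n" unfolding Z_def using Y J by simp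
  have S: "S \<in> carrier_mat n n" and N: "N \<in> carrier_mat n n"
    unfolding S_def N_def using Y J Z by auto
  have Z_assoc: "Z = Y * (J * Y)" unfolding Z_def by (rule assoc_mult_mat[OF Y J Y])
  have YZ: "Y * Z = Z"
    using assoc_mult_mat[OF Y Y JY] YY unfolding Z_assoc by simp
  have "J * Z = (J * Y * J) * Y"
    unfolding Z_def using assoc_mult_mat[OF J YJ Y] assoc_mult_mat[OF J Y J] by simp
  then have JZ: "J * Z = \<gamma> \<cdot>\<^sub>m (J * Y)"
    unfolding JYJ using mult_smult_assoc_mat[OF J Y] by simp
  have YJZ: "(Y * J) * Z = \<gamma> \<cdot>\<^sub>m Z"
  proof -
    have "(Y * J) * Z = Y * (J * Z)" by (rule assoc_mult_mat[OF Y J Z])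
    also have "\<dots> = \<gamma> \<cdot>\<^sub>m (Y * (J * Y))" unfolding JZ by (rule mult_smult_distrib[OF Y JY])
    finally show ?thesis using Z_assoc by simp
  qed
  have "Y * S = Y * (\<alpha> \<cdot>\<^sub>m 1\<^sub>m n) + Y * (l \<cdot>\<^sub>m J)"
    unfolding S_def by (rule mult_add_distrib_mat[OF Y]) (use J in auto)
  also have "\<dots> = \<alpha> \<cdot>\<^sub>m Y + l \<cdot>\<^sub>m (Y * J)"
    using mult_smult_distrib[OF Y one_carrier_mat] mult_smult_distrib[OF Y J] Y by simp
  finally have YS: "Y * S = \<alpha> \<cdot>\<^sub>m Y + l \<cdot>\<^sub>m (Y * J)" .
  have YN: "Y * N = (1 / \<alpha>) \<cdot>\<^sub>m Y - c \<cdot>\<^sub>m Z"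
    unfolding N_def mult_smult_diff_mat[OF Y Y Z] YY YZ ..
  have YJN: "(Y * J) * N = (1 / \<alpha>) \<cdot>\<^sub>m Z - c \<cdot>\<^sub>m (\<gamma> \<cdot>\<^sub>m Z)"
    unfolding N_def mult_smult_diff_mat[OF YJ Y Z] YJZ Z_def[symmetric] ..
  have "Y * (S * N) = (Y * S) * N" by (rule assoc_mult_mat[OF Y S N, symmetric])
  also have "\<dots> = (\<alpha> \<cdot>\<^sub>m Y) * N + (l \<cdot>\<^sub>m (Y * J)) * N"
    unfolding YS by (rule add_mult_distrib_mat[OF smult_carrier_mat[OF Y] smult_carrier_mat[OF YJ] N])
  also have "\<dots> = \<alpha> \<cdot>\<^sub>m (Y * N) + l \<cdot>\<^sub>m ((Y * J) * N)"
    using mult_smult_assoc_mat[OF Y N] mult_smult_assoc_mat[OF YJ N] by simp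
  also have "\<dots> = Y"
  proof (rule eq_matI)
    fix i j assume "i < dim_row Y" "j < dim_col Y"
    then have ij: "i < n" "j < n" using Y by auto
    have "\<alpha> * ((1 / \<alpha>) * Y $$ (i,j) - c * Z $$ (i,j))
        + l * ((1 / \<alpha>) * Z $$ (i,j) - c * (\<gamma> * Z $$ (i,j)))
        = Y $$ (i,j) + (l / \<alpha> - c * (\<alpha> + l * \<gamma>)) * Z $$ (i,j)"
      using \<alpha> by (simp add: algebra_simps)
    also have "c * (\<alpha> + l * \<gamma>) = l / \<alpha>" unfolding c_def using den by simp
    finally have "\<alpha> * ((1 / \<alpha>) * Y $$ (i,j) - c * Z $$ (i,j))
        + l * ((1 / \<alpha>) * Z $$ (i,j) - c * (\<gamma> * Z $$ (i,j))) = Y $$ (i,j)" by simp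
    then show "(\<alpha> \<cdot>\<^sub>m (Y * N) + l \<cdot>\<^sub>m ((Y * J) * N)) $$ (i,j) = Y $$ (i,j)"
      unfolding YN YJN using ij Y Z by simp
  qed (use Y N in auto)
  finally show ?thesis unfolding S_def N_def Z_def .
qed

lemma sum_single:
  assumes "finite A" "k \<in> A" "\<And>j. j \<in> A \<Longrightarrow> j \<noteq> k \<Longrightarrow> f j = 0"
  shows "sum f A = f k"
proof -
  have "sum f A = f k + sum f (A - {k})" using assms by (simp add: sum.remove)
  also have "sum f (A - {k}) = 0" using assms by (intro sum.neutral) auto
  finally show ?thesis by simp
qed

lemma blk_disj:
  assumes "i \<in> blk p q k" "i \<in> blk p q k'" shows "k = k'"
proof (rule ccontr)
  assume ne: "k \<noteq> k'"
  have mono: "off p q (Suc a) \<le> off p q b" if "a < b" for a b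
    using that unfolding off_def by (intro sum_mono2) auto
  have offS: "off p q (Suc a) = off p q a + p a + q a" for a unfolding off_def by simp
  show False
  proof (cases "k < k'")
    case True
    from mono[OF True] offS[of k] assms show False unfolding blk_def by auto
  next
    case False
    with ne have "k' < k" by simp
    from mono[OF this] offS[of k'] assms show False unfolding blk_def by auto
  qed
qed

lemma blk_le_off:
  assumes "i \<in> blk p q k" "k < r" shows "i < off p q r"
proof -
  have "off p q (Suc k) \<le> off p q r" using assms unfolding off_def by (intro sum_mono2) auto
  moreover have "off p q (Suc k) = off p q k + p k + q k" unfolding off_def by simp
  ultimately show ?thesis using assms unfolding blk_def by auto
qed

lemma card_blk: "card (blk p q k) = p k + q k" unfolding blk_def by simp

text \<open>side_sign k i is +1 on the first class of block k and -1 on the second; sign_vec k is the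
  signed indicator vector u_k of block k, and blk_size k = p_k + q_k = |u_k|^2.\<close>
definition side_sign :: "(nat \<Rightarrow> nat) \<Rightarrow> (nat \<Rightarrow> nat) \<Rightarrow> nat \<Rightarrow> nat \<Rightarrow> real" where
  "side_sign p q k i = (if i < off p q k + p k then 1 else -1)"

definition sign_vec :: "(nat \<Rightarrow> nat) \<Rightarrow> (nat \<Rightarrow> nat) \<Rightarrow> nat \<Rightarrow> nat \<Rightarrow> real" where
  "sign_vec p q k i = (if i \<in> blk p q k then side_sign p q k i else 0)"

definition blk_size :: "(nat \<Rightarrow> nat) \<Rightarrow> (nat \<Rightarrow> nat) \<Rightarrow> nat \<Rightarrow> real" where
  "blk_size p q k = real (p k) + real (q k)"

lemma side_sign_sq[simp]: "side_sign p q k i * side_sign p q k i = 1"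
  unfolding side_sign_def by auto

lemma blk_cover: "i < off p q r \<Longrightarrow> \<exists>k<r. i \<in> blk p q k"
proof (induction r)
  case 0 then show ?case by (simp add: off_def)
next
  case (Suc r)
  have o: "off p q (Suc r) = off p q r + p r + q r" unfolding off_def by simp
  show ?case
  proof (cases "i < off p q r")
    case True then show ?thesis using Suc.IH by (meson less_Suc_eq)
  next
    case False then have "i \<in> blk p q r" using Suc.prems o unfolding blk_def by auto
    then show ?thesis by blast
  qed
qed

lemma gam_nonneg: "gam r p q \<ge> 0"
  unfolding gam_def by (intro sum_nonneg) simp

locale signless_setting =
  fixes n r :: nat and P :: "real mat" and p q :: "nat \<Rightarrow> nat"
  assumes sl: "signless_laplacian n P" and bl: "bip_labelled n P r p q"
begin

lemma P_carrier: "P \<in> carrier_mat n n" using sl unfolding signless_laplacian_def by auto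
lemma dim_P[simp]: "dim_row P = n" "dim_col P = n" using P_carrier by auto
lemma P_sym: "i < n \<Longrightarrow> j < n \<Longrightarrow> P $$ (j,i) = P $$ (i,j)"
  using sl unfolding signless_laplacian_def
  by (metis index_transpose_mat(1) dim_P)
lemma P_off: "i < n \<Longrightarrow> j < n \<Longrightarrow> i \<noteq> j \<Longrightarrow> P $$ (i,j) = 0 \<or> P $$ (i,j) = 1"
  using sl unfolding signless_laplacian_def by auto
lemma P_diag: "i < n \<Longrightarrow> P $$ (i,i) \<ge> 0"
  using sl unfolding signless_laplacian_def by auto
lemma Delta_02: "i < n \<Longrightarrow> Delta P i = 0 \<or> Delta P i = 2"
  using sl unfolding signless_laplacian_def by auto
lemma Delta_eq: "i < n \<Longrightarrow> Delta P i = P $$ (i,i) - (\<Sum>j\<in>{0..<n} - {i}. P $$ (i,j))"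
proof -
  assume i: "i < n"
  have "(\<Sum>j\<in>{0..<n} - {i}. \<bar>P $$ (i,j)\<bar>) = (\<Sum>j\<in>{0..<n} - {i}. P $$ (i,j))"
  proof (intro sum.cong refl)
    fix j assume "j \<in> {0..<n} - {i}"
    then show "\<bar>P $$ (i,j)\<bar> = P $$ (i,j)" using P_off[of i j] i by auto
  qed
  then show ?thesis unfolding Delta_def using P_diag[OF i] by simp
qed

lemma off_le_n: "off p q r \<le> n" using bl unfolding bip_labelled_def by auto
lemma blk_size_pos: "k < r \<Longrightarrow> blk_size p q k > 0" using bl unfolding bip_labelled_def blk_size_def by force
lemma component_is_blk: "k < r \<Longrightarrow> i \<in> blk p q k \<Longrightarrow> gcomp P i = blk p q k"
  using bl unfolding bip_labelled_def by auto
lemma blk_no_loop: "k < r \<Longrightarrow> i \<in> blk p q k \<Longrightarrow> \<not> gloop P i"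
  using bl unfolding bip_labelled_def by auto
lemma edge_crosses_sides: "k < r \<Longrightarrow> i \<in> blk p q k \<Longrightarrow> j \<in> blk p q k \<Longrightarrow> gadj P i j \<Longrightarrow>
   (i < off p q k + p k \<longleftrightarrow> \<not> j < off p q k + p k)"
  using bl unfolding bip_labelled_def by auto
lemma tail_nonbipartite: "off p q r \<le> i \<Longrightarrow> i < n \<Longrightarrow> \<not> bipartite_on P (gcomp P i)"
  using bl unfolding bip_labelled_def by auto
lemma blk_subset: "k < r \<Longrightarrow> blk p q k \<subseteq> {..<n}" using blk_le_off off_le_n by fastforce

lemma gadj_sym: "gadj P i j \<Longrightarrow> gadj P j i" unfolding gadj_def using P_sym by auto

lemma off_diagonal_row_sum:
  assumes i: "i < n"
  shows "(\<Sum>j<n. if i \<noteq> j then P $$ (i,j) else 0) = P $$ (i,i) - Delta P i"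
proof -
  have "(\<Sum>j<n. if i \<noteq> j then P $$ (i,j) else 0) = (\<Sum>j\<in>{0..<n} - {i}. P $$ (i,j))"
    by (subst sum.If_cases) (auto simp: lessThan_atLeast0 intro!: sum.cong)
  then show ?thesis using Delta_eq[OF i] by simp
qed

lemma qf_P:
  "qf n P x = (\<Sum>i<n. Delta P i * (x i)^2) +
     (\<Sum>i<n. \<Sum>j<n. if i \<noteq> j then P $$ (i,j) * (x i + x j)^2 else 0) / 2"
proof -
  define E where "E = (\<Sum>i<n. \<Sum>j<n. if i \<noteq> j then P $$ (i,j) * (x i + x j)^2 else 0)"
  define A where "A = (\<Sum>i<n. \<Sum>j<n. if i \<noteq> j then P $$ (i,j) * (x i)^2 else 0)"
  define B where "B = (\<Sum>i<n. \<Sum>j<n. if i \<noteq> j then P $$ (i,j) * (x j)^2 else 0)"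
  define C where "C = (\<Sum>i<n. \<Sum>j<n. if i \<noteq> j then P $$ (i,j) * x i * x j else 0)"
  have E: "E = A + B + 2 * C" unfolding E_def A_def B_def C_def
    by (simp add: sum.distrib[symmetric] sum_distrib_left power2_eq_square algebra_simps if_distrib cong: if_cong)
  have "B = (\<Sum>j<n. \<Sum>i<n. if i \<noteq> j then P $$ (i,j) * (x j)^2 else 0)"
    unfolding B_def by (rule sum.swap)
  also have "\<dots> = A" unfolding A_def
    by (intro sum.cong refl) (auto simp: P_sym)
  finally have BA: "B = A" .
  have A: "A = (\<Sum>i<n. (P $$ (i,i) - Delta P i) * (x i)^2)"
    unfolding A_def
  proof (intro sum.cong refl)
    fix i assume "i \<in> {..<n}"
    have "(\<Sum>j<n. if i \<noteq> j then P $$ (i,j) * (x i)^2 else 0) = (\<Sum>j<n. if i \<noteq> j then P $$ (i,j) else 0) * (x i)^2"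
      by (subst sum_distrib_right) (auto intro!: sum.cong)
    then show "(\<Sum>j<n. if i \<noteq> j then P $$ (i,j) * (x i)^2 else 0) = (P $$ (i,i) - Delta P i) * (x i)^2"
      using off_diagonal_row_sum \<open>i \<in> {..<n}\<close> by simp
  qed
  have Q: "qf n P x = (\<Sum>i<n. P $$ (i,i) * (x i)^2) + C"
    unfolding C_def by (rule qf_diag_split)
  show ?thesis unfolding E_def[symmetric] using E BA A Q
    by (simp add: sum_subtractf left_diff_distrib field_simps)
qed

lemma qf_P_nonneg: "qf n P x \<ge> 0"
proof -
  have "(\<Sum>i<n. Delta P i * (x i)^2) \<ge> 0"
    by (intro sum_nonneg) (use Delta_02 in force)
  moreover have "(\<Sum>i<n. \<Sum>j<n. if i \<noteq> j then P $$ (i,j) * (x i + x j)^2 else 0) \<ge> 0"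
    by (intro sum_nonneg) (use P_off in force)
  ultimately show ?thesis by (simp add: qf_P)
qed

lemma qf_P_zero:
  assumes "qf n P x = 0"
  shows "\<And>i. gloop P i \<Longrightarrow> x i = 0" and "\<And>i j. gadj P i j \<Longrightarrow> x i + x j = 0"
proof -
  have t1: "\<forall>i\<in>{..<n}. 0 \<le> Delta P i * (x i)^2" using Delta_02 by force
  have t2: "\<forall>i\<in>{..<n}. 0 \<le> (\<Sum>j<n. if i \<noteq> j then P $$ (i,j) * (x i + x j)^2 else 0)"
    using P_off by (force intro: sum_nonneg)
  have s1: "(\<Sum>i<n. Delta P i * (x i)^2) = 0" and
       s2: "(\<Sum>i<n. \<Sum>j<n. if i \<noteq> j then P $$ (i,j) * (x i + x j)^2 else 0) = 0"
  proof -
    have a: "(\<Sum>i<n. Delta P i * (x i)^2) \<ge> 0" by (rule sum_nonneg) (use t1 in blast)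
    have b: "(\<Sum>i<n. \<Sum>j<n. if i \<noteq> j then P $$ (i,j) * (x i + x j)^2 else 0) \<ge> 0"
      by (rule sum_nonneg) (use t2 in blast)
    show "(\<Sum>i<n. Delta P i * (x i)^2) = 0" using a b assms qf_P[of x] by linarith
    show "(\<Sum>i<n. \<Sum>j<n. if i \<noteq> j then P $$ (i,j) * (x i + x j)^2 else 0) = 0" using a b assms qf_P[of x] by linarith
  qed
  {
    fix i assume "gloop P i"
    then have i: "i < n" "Delta P i = 2" unfolding gloop_def by auto
    have "Delta P i * (x i)^2 = 0"
      using sum_nonneg_eq_0_iff[of "{..<n}" "\<lambda>i. Delta P i * (x i)^2"] s1 t1 i by force
    with i show "x i = 0" by simp
  }
  {
    fix i j assume "gadj P i j"
    then have g: "i < n" "j < n" "i \<noteq> j" "P $$ (i,j) = 1" unfolding gadj_def by auto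
    have "(\<Sum>j<n. if i \<noteq> j then P $$ (i,j) * (x i + x j)^2 else 0) = 0"
      using sum_nonneg_eq_0_iff[of "{..<n}" "\<lambda>i. (\<Sum>j<n. if i \<noteq> j then P $$ (i,j) * (x i + x j)^2 else 0)"] s2 t2 g by auto
    moreover have "\<forall>j\<in>{..<n}. 0 \<le> (if i \<noteq> j then P $$ (i,j) * (x i + x j)^2 else 0)"
      using P_off g by force
    ultimately have "\<forall>j'\<in>{..<n}. (if i \<noteq> j' then P $$ (i,j') * (x i + x j')^2 else 0) = 0"
      using sum_nonneg_eq_0_iff[of "{..<n}" "\<lambda>j. (if i \<noteq> j then P $$ (i,j) * (x i + x j)^2 else 0)"] by blast
    then have "(if i \<noteq> j then P $$ (i,j) * (x i + x j)^2 else 0) = 0" using g(2) by blast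
    with g show "x i + x j = 0" by simp
  }
qed

lemma walk_preserves_signed_value:
  assumes x: "qf n P x = 0" and k: "k < r" "i \<in> blk p q k" and R: "(gadj P)\<^sup>*\<^sup>* i j"
  shows "j \<in> blk p q k \<and> side_sign p q k j * x j = side_sign p q k i * x i"
  using R
proof (induction rule: rtranclp_induct)
  case base then show ?case using k by simp
next
  case (step j j')
  then have j: "j \<in> blk p q k" and e: "side_sign p q k j * x j = side_sign p q k i * x i" by auto
  have "j' \<in> gcomp P j" using step(2) unfolding gcomp_def gadj_def by auto
  then have j': "j' \<in> blk p q k" using component_is_blk[OF k(1) j] by simp
  have side: "(j < off p q k + p k \<longleftrightarrow> \<not> j' < off p q k + p k)" using edge_crosses_sides[OF k(1) j j' step(2)] .
  have "x j + x j' = 0" using qf_P_zero(2)[OF x step(2)] .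
  then show ?case using j' e side unfolding side_sign_def by (auto split: if_splits)
qed

lemma walk_preserves_abs:
  assumes x: "qf n P x = 0" and R: "(gadj P)\<^sup>*\<^sup>* i j"
  shows "x j = x i \<or> x j = - x i"
  using R
proof (induction rule: rtranclp_induct)
  case base then show ?case by simp
next
  case (step j j')
  have "x j + x j' = 0" using qf_P_zero(2)[OF x step(2)] .
  then show ?case using step(3) by auto
qed

lemma sum_sign_vec: "k < r \<Longrightarrow> (\<Sum>a<n. sign_vec p q k a * f a) = (\<Sum>a\<in>blk p q k. side_sign p q k a * f a)"
proof -
  assume k: "k < r"
  have "(\<Sum>a<n. sign_vec p q k a * f a) = (\<Sum>a<n. if a \<in> blk p q k then side_sign p q k a * f a else 0)"
    unfolding sign_vec_def by (intro sum.cong refl) auto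
  also have "\<dots> = (\<Sum>a\<in>{..<n} \<inter> blk p q k. side_sign p q k a * f a)"
    by (simp add: sum.inter_restrict)
  also have "{..<n} \<inter> blk p q k = blk p q k" using blk_subset[OF k] by auto
  finally show ?thesis .
qed

text \<open>Kernel vectors vanish on non-bipartite components: otherwise the sign pattern of x
  would 2-colour the component.\<close>
lemma kernel_vanishes_outside:
  assumes x: "qf n P x = 0" and i: "i < n" "off p q r \<le> i"
  shows "x i = 0"
proof (rule ccontr)
  assume xi: "x i \<noteq> 0"
  define C where "C = gcomp P i"
  have pm: "x j = x i \<or> x j = - x i" if "j \<in> C" for j
    using walk_preserves_abs[OF x] that unfolding C_def gcomp_def by auto
  have nl: "\<forall>j\<in>C. \<not> gloop P j"
  proof
    fix j assume j: "j \<in> C"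
    show "\<not> gloop P j"
    proof
      assume "gloop P j"
      then have "x j = 0" using qf_P_zero(1)[OF x] by blast
      with pm[OF j] xi show False by auto
    qed
  qed
  have col: "\<forall>j\<in>C. \<forall>j'\<in>C. gadj P j j' \<longrightarrow> (j \<in> {j \<in> C. x j = x i}) = (j' \<notin> {j \<in> C. x j = x i})"
  proof (intro ballI impI)
    fix j j' assume j: "j \<in> C" and j': "j' \<in> C" and e: "gadj P j j'"
    have "x j + x j' = 0" using qf_P_zero(2)[OF x e] .
    then show "(j \<in> {j \<in> C. x j = x i}) = (j' \<notin> {j \<in> C. x j = x i})"
      using pm[OF j] pm[OF j'] j j' xi by auto
  qed
  have "bipartite_on P C"
    unfolding bipartite_on_def using nl col by blast
  with tail_nonbipartite[OF i(2) i(1)] show False unfolding C_def by simp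
qed

lemma kernel_in_span:
  assumes x: "qf n P x = 0" and i: "i < n"
  shows "x i = (\<Sum>k<r. sign_vec p q k i * (\<Sum>a<n. sign_vec p q k a * x a) / blk_size p q k)"
proof (cases "\<exists>k<r. i \<in> blk p q k")
  case True
  then obtain k where k: "k < r" "i \<in> blk p q k" by blast
  have "(\<Sum>a<n. sign_vec p q k a * x a) = (\<Sum>a\<in>blk p q k. side_sign p q k i * x i)"
    unfolding sum_sign_vec[OF k(1)]
  proof (intro sum.cong refl)
    fix a assume a: "a \<in> blk p q k"
    then have "a \<in> gcomp P i" using component_is_blk[OF k] by simp
    then have "(gadj P)\<^sup>*\<^sup>* i a" unfolding gcomp_def by simp
    then show "side_sign p q k a * x a = side_sign p q k i * x i" using walk_preserves_signed_value[OF x k] by blast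
  qed
  also have "\<dots> = blk_size p q k * (side_sign p q k i * x i)" by (simp add: card_blk blk_size_def)
  finally have s: "(\<Sum>a<n. sign_vec p q k a * x a) = blk_size p q k * (side_sign p q k i * x i)" .
  have "(\<Sum>k'<r. sign_vec p q k' i * (\<Sum>a<n. sign_vec p q k' a * x a) / blk_size p q k') =
      sign_vec p q k i * (\<Sum>a<n. sign_vec p q k a * x a) / blk_size p q k"
    by (rule sum_single) (use k blk_disj in \<open>auto simp: sign_vec_def\<close>)
  also have "\<dots> = x i" using s k blk_size_pos[OF k(1)] by (simp add: sign_vec_def)
  finally show ?thesis by simp
next
  case False
  then have "off p q r \<le> i" using blk_cover[of i p q r] by (meson not_le)
  then have "x i = 0" using kernel_vanishes_outside[OF x i] by simp
  moreover have "\<forall>k<r. sign_vec p q k i = 0" using False by (auto simp: sign_vec_def)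
  ultimately show ?thesis by simp
qed

text \<open>Inside block k, every neighbour j of i lies on the other side, so it carries the opposite sign.\<close>
lemma neighbour_opposite_sign:
  assumes k: "k < r" and i: "i \<in> blk p q k" "i < n" and j: "j < n" "j \<noteq> i"
  shows "P $$ (i,j) * sign_vec p q k j = P $$ (i,j) * (- side_sign p q k i)"
proof (cases "P $$ (i,j) = 1")
  case True
  then have e: "gadj P i j" using i j unfolding gadj_def by auto
  then have "j \<in> gcomp P i" unfolding gcomp_def gadj_def by auto
  then have jb: "j \<in> blk p q k" using component_is_blk[OF k i(1)] by simp
  have "i < off p q k + p k \<longleftrightarrow> \<not> j < off p q k + p k" by (rule edge_crosses_sides[OF k i(1) jb e])
  then show ?thesis using jb unfolding sign_vec_def side_sign_def by auto
next
  case False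
  then have "P $$ (i,j) = 0" using P_off[of i j] i j by auto
  then show ?thesis by simp
qed

text \<open>An index outside block k has no neighbours in block k, since blocks are components.\<close>
lemma neighbour_outside_blk:
  assumes k: "k < r" and i: "i \<notin> blk p q k" "i < n" and j: "j < n" "j \<noteq> i"
  shows "P $$ (i,j) * sign_vec p q k j = 0"
proof (cases "P $$ (i,j) = 1 \<and> j \<in> blk p q k")
  case True
  then have "gadj P i j" using i j unfolding gadj_def by auto
  then have "gadj P j i" by (rule gadj_sym)
  then have "i \<in> gcomp P j" unfolding gcomp_def gadj_def by auto
  then have "i \<in> blk p q k" using component_is_blk[OF k] True by simp
  with i show ?thesis by simp
next
  case False
  then show ?thesis using P_off[of i j] i j by (auto simp: sign_vec_def)
qed

text \<open>Hence each u_k lies in the kernel of P: at i in block k there is no loop, so the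
  off-diagonal row sum of P equals the diagonal entry and the contributions cancel.\<close>
lemma P_sign_vec: assumes k: "k < r" and i: "i < n" shows "(\<Sum>j<n. P $$ (i,j) * sign_vec p q k j) = 0"
proof -
  have split: "(\<Sum>j<n. P $$ (i,j) * sign_vec p q k j)
      = P $$ (i,i) * sign_vec p q k i + (\<Sum>j\<in>{0..<n} - {i}. P $$ (i,j) * sign_vec p q k j)"
    using i by (simp add: lessThan_atLeast0 sum.remove)
  show ?thesis
  proof (cases "i \<in> blk p q k")
    case True
    have "Delta P i = 0" using Delta_02[OF i] blk_no_loop[OF k True] i unfolding gloop_def by auto
    then have rows: "(\<Sum>j\<in>{0..<n} - {i}. P $$ (i,j)) = P $$ (i,i)" using Delta_eq[OF i] by simp
    have "(\<Sum>j\<in>{0..<n} - {i}. P $$ (i,j) * sign_vec p q k j)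
        = (\<Sum>j\<in>{0..<n} - {i}. P $$ (i,j)) * (- side_sign p q k i)"
      unfolding sum_distrib_right using neighbour_opposite_sign[OF k True i] by (intro sum.cong) auto
    then show ?thesis using split rows True by (simp add: sign_vec_def)
  next
    case False
    have "(\<Sum>j\<in>{0..<n} - {i}. P $$ (i,j) * sign_vec p q k j) = 0"
      using neighbour_outside_blk[OF k False i] by (intro sum.neutral) auto
    then show ?thesis using split False by (simp add: sign_vec_def)
  qed
qed

lemma sign_vec_total: assumes k: "k < r" shows "(\<Sum>a<n. sign_vec p q k a) = real (p k) - real (q k)"
proof -
  define ofs where "ofs = off p q k"
  have "(\<Sum>a<n. sign_vec p q k a) = (\<Sum>a\<in>blk p q k. side_sign p q k a * 1)" using sum_sign_vec[OF k, of "\<lambda>_. 1"] by simp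
  also have "\<dots> = (\<Sum>a\<in>{ofs..<ofs + p k}. side_sign p q k a) + (\<Sum>a\<in>{ofs + p k..<ofs + p k + q k}. side_sign p q k a)"
    unfolding blk_def ofs_def[symmetric] by (simp add: sum.atLeastLessThan_concat)
  also have "(\<Sum>a\<in>{ofs..<ofs + p k}. side_sign p q k a) = (\<Sum>a\<in>{ofs..<ofs + p k}. 1)"
    by (intro sum.cong refl) (auto simp: side_sign_def ofs_def)
  also have "(\<Sum>a\<in>{ofs + p k..<ofs + p k + q k}. side_sign p q k a) = (\<Sum>a\<in>{ofs + p k..<ofs + p k + q k}. -1)"
    by (intro sum.cong refl) (auto simp: side_sign_def ofs_def)
  finally show ?thesis by simp
qed

lemma sign_vec_orthogonal: assumes k: "k < r" and k': "k' < r"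
  shows "(\<Sum>a<n. sign_vec p q k a * sign_vec p q k' a) = (if k = k' then blk_size p q k else 0)"
proof (cases "k = k'")
  case True
  have "(\<Sum>a<n. sign_vec p q k a * sign_vec p q k' a) = (\<Sum>a\<in>blk p q k. side_sign p q k a * sign_vec p q k a)"
    using True sum_sign_vec[OF k, of "sign_vec p q k"] by simp
  also have "\<dots> = (\<Sum>a\<in>blk p q k. 1)" by (intro sum.cong refl) (auto simp: sign_vec_def)
  finally show ?thesis using True by (simp add: card_blk blk_size_def)
next
  case False
  have "sign_vec p q k a * sign_vec p q k' a = 0" for a using blk_disj[of a p q k k'] False by (auto simp: sign_vec_def)
  then show ?thesis using False by (auto intro!: sum.neutral)
qed

abbreviation Y :: "real mat" where "Y \<equiv> Ymat n r p q"
abbreviation J :: "real mat" where "J \<equiv> mat n n (\<lambda>_. 1)"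

lemma Y_carrier[simp]: "Y \<in> carrier_mat n n" unfolding Ymat_def by simp
lemma J_carrier: "J \<in> carrier_mat n n" by simp

lemma dim_Y[simp]: "dim_row Y = n" "dim_col Y = n" unfolding Ymat_def by simp_all

lemma Y_entry: assumes "i < n" "j < n"
  shows "Y $$ (i,j) = (\<Sum>k<r. sign_vec p q k i * sign_vec p q k j / blk_size p q k)"
  unfolding Ymat_def using assms
  by (auto intro!: sum.cong simp: sign_vec_def side_sign_def blk_size_def)

lemma Y_sym: "i < n \<Longrightarrow> j < n \<Longrightarrow> Y $$ (j,i) = Y $$ (i,j)"
  by (simp add: Y_entry mult.commute)

lemma yv_eq: "yv r p q i = (\<Sum>k<r. sign_vec p q k i * (real (p k) - real (q k)) / blk_size p q k)"
  unfolding yv_def by (intro sum.cong refl) (auto simp: sign_vec_def side_sign_def blk_size_def)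

lemma Y_rowsum: assumes i: "i < n" shows "(\<Sum>a<n. Y $$ (i,a)) = yv r p q i"
proof -
  have "(\<Sum>a<n. Y $$ (i,a)) = (\<Sum>a<n. \<Sum>k<r. sign_vec p q k i / blk_size p q k * sign_vec p q k a)"
    using i by (intro sum.cong refl) (simp add: Y_entry)
  also have "\<dots> = (\<Sum>k<r. sign_vec p q k i / blk_size p q k * (\<Sum>a<n. sign_vec p q k a))"
    by (subst sum.swap) (simp add: sum_distrib_left)
  also have "\<dots> = yv r p q i" unfolding yv_eq by (intro sum.cong refl) (auto simp: sign_vec_total)
  finally show ?thesis .
qed

lemma Y_idem: "Y * Y = Y"
proof (rule eq_matI)
  fix i j assume i: "i < dim_row Y" and j: "j < dim_col Y"
  then have i: "i < n" and j: "j < n" by auto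
  have "(Y * Y) $$ (i,j) = (\<Sum>a<n. Y $$ (i,a) * Y $$ (a,j))"
    by (rule mat_mult_entry[OF Y_carrier Y_carrier i j])
  also have "\<dots> = (\<Sum>a<n. \<Sum>k<r. \<Sum>k'<r. (sign_vec p q k i / blk_size p q k * (sign_vec p q k' j / blk_size p q k')) * (sign_vec p q k a * sign_vec p q k' a))"
  proof (intro sum.cong refl)
    fix a assume a: "a \<in> {..<n}"
    have "Y $$ (i,a) * Y $$ (a,j) = (\<Sum>k<r. sign_vec p q k i * sign_vec p q k a / blk_size p q k) * (\<Sum>k'<r. sign_vec p q k' a * sign_vec p q k' j / blk_size p q k')"
      using a i j by (simp add: Y_entry)
    also have "\<dots> = (\<Sum>k<r. \<Sum>k'<r. (sign_vec p q k i * sign_vec p q k a / blk_size p q k) * (sign_vec p q k' a * sign_vec p q k' j / blk_size p q k'))"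
      by (rule sum_product)
    also have "\<dots> = (\<Sum>k<r. \<Sum>k'<r. (sign_vec p q k i / blk_size p q k * (sign_vec p q k' j / blk_size p q k')) * (sign_vec p q k a * sign_vec p q k' a))"
      by (intro sum.cong refl) (simp add: field_simps)
    finally show "Y $$ (i,a) * Y $$ (a,j) = \<dots>" .
  qed
  also have "\<dots> = (\<Sum>k<r. \<Sum>a<n. \<Sum>k'<r. (sign_vec p q k i / blk_size p q k * (sign_vec p q k' j / blk_size p q k')) * (sign_vec p q k a * sign_vec p q k' a))"
    by (rule sum.swap)
  also have "\<dots> = (\<Sum>k<r. \<Sum>k'<r. \<Sum>a<n. (sign_vec p q k i / blk_size p q k * (sign_vec p q k' j / blk_size p q k')) * (sign_vec p q k a * sign_vec p q k' a))"
    by (rule sum.cong[OF refl], rule sum.swap)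
  also have "\<dots> = (\<Sum>k<r. \<Sum>k'<r. (sign_vec p q k i / blk_size p q k * (sign_vec p q k' j / blk_size p q k')) * (\<Sum>a<n. sign_vec p q k a * sign_vec p q k' a))"
    by (intro sum.cong refl) (rule sum_distrib_left[symmetric])
  also have "\<dots> = (\<Sum>k<r. \<Sum>k'<r. if k' = k then sign_vec p q k i * sign_vec p q k j / blk_size p q k else 0)"
  proof (intro sum.cong refl)
    fix k k' assume k: "k \<in> {..<r}" and k': "k' \<in> {..<r}"
    then have sp: "blk_size p q k > 0" using blk_size_pos by simp
    show "(sign_vec p q k i / blk_size p q k * (sign_vec p q k' j / blk_size p q k')) * (\<Sum>a<n. sign_vec p q k a * sign_vec p q k' a) = (if k' = k then sign_vec p q k i * sign_vec p q k j / blk_size p q k else 0)"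
      using k k' sp by (simp add: sign_vec_orthogonal field_simps)
  qed
  also have "\<dots> = Y $$ (i,j)" using i j by (simp add: Y_entry)
  finally show "(Y * Y) $$ (i,j) = Y $$ (i,j)" .
qed auto

lemma PY: "P * Y = 0\<^sub>m n n"
proof (rule eq_matI)
  fix i j assume "i < dim_row (0\<^sub>m n n :: real mat)" "j < dim_col (0\<^sub>m n n :: real mat)"
  then have i: "i < n" and j: "j < n" by auto
  have "(P * Y) $$ (i,j) = (\<Sum>a<n. P $$ (i,a) * Y $$ (a,j))"
    by (rule mat_mult_entry[OF P_carrier Y_carrier i j])
  also have "\<dots> = (\<Sum>a<n. \<Sum>k<r. sign_vec p q k j / blk_size p q k * (P $$ (i,a) * sign_vec p q k a))"
  proof (intro sum.cong refl)
    fix a assume a: "a \<in> {..<n}"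
    have "P $$ (i,a) * Y $$ (a,j) = (\<Sum>k<r. P $$ (i,a) * (sign_vec p q k a * sign_vec p q k j / blk_size p q k))"
      using a j by (simp add: Y_entry sum_distrib_left)
    also have "\<dots> = (\<Sum>k<r. sign_vec p q k j / blk_size p q k * (P $$ (i,a) * sign_vec p q k a))"
      by (intro sum.cong refl) simp
    finally show "P $$ (i,a) * Y $$ (a,j) = \<dots>" .
  qed
  also have "\<dots> = (\<Sum>k<r. sign_vec p q k j / blk_size p q k * (\<Sum>a<n. P $$ (i,a) * sign_vec p q k a))"
    by (subst sum.swap) (simp add: sum_distrib_left)
  also have "\<dots> = 0" using i by (simp add: P_sign_vec)
  finally show "(P * Y) $$ (i,j) = 0\<^sub>m n n $$ (i,j)" using i j by simp
qed auto

lemma YP: "Y * P = 0\<^sub>m n n"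
proof (rule eq_matI)
  fix i j assume "i < dim_row (0\<^sub>m n n :: real mat)" "j < dim_col (0\<^sub>m n n :: real mat)"
  then have i: "i < n" and j: "j < n" by auto
  have "(Y * P) $$ (i,j) = (\<Sum>a<n. Y $$ (i,a) * P $$ (a,j))"
    by (rule mat_mult_entry[OF Y_carrier P_carrier i j])
  also have "\<dots> = (\<Sum>a<n. P $$ (j,a) * Y $$ (a,i))"
    using i j by (intro sum.cong refl) (auto simp: Y_sym P_sym)
  also have "\<dots> = (P * Y) $$ (j,i)" by (rule mat_mult_entry[OF P_carrier Y_carrier j i, symmetric])
  also have "\<dots> = 0" using i j by (simp add: PY)
  finally show "(Y * P) $$ (i,j) = 0\<^sub>m n n $$ (i,j)" using i j by simp
qed auto

lemma gam_eq: "(\<Sum>a<n. yv r p q a) = gam r p q"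
proof -
  have "(\<Sum>a<n. yv r p q a) = (\<Sum>a<n. \<Sum>k<r. (real (p k) - real (q k)) / blk_size p q k * sign_vec p q k a)"
    unfolding yv_eq by (intro sum.cong refl) (simp add: algebra_simps)
  also have "\<dots> = (\<Sum>k<r. (real (p k) - real (q k)) / blk_size p q k * (\<Sum>a<n. sign_vec p q k a))"
    by (subst sum.swap) (simp add: sum_distrib_left)
  also have "\<dots> = gam r p q" unfolding gam_def
    by (intro sum.cong refl) (simp add: sign_vec_total blk_size_def power2_eq_square)
  finally show ?thesis .
qed

lemma YJY: "Y * J * Y = yyT n r p q"
proof (rule eq_matI)
  fix i j assume "i < dim_row (yyT n r p q)" "j < dim_col (yyT n r p q)"
  then have i: "i < n" and j: "j < n" by (auto simp: yyT_def)
  have "(Y * J * Y) $$ (i,j) = (\<Sum>b<n. (Y * J) $$ (i,b) * Y $$ (b,j))"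
    by (rule mat_mult_entry[OF mult_carrier_mat[OF Y_carrier J_carrier] Y_carrier i j])
  also have "\<dots> = (\<Sum>b<n. yv r p q i * Y $$ (b,j))"
  proof (intro sum.cong refl)
    fix b assume b: "b \<in> {..<n}"
    have "(Y * J) $$ (i,b) = (\<Sum>a<n. Y $$ (i,a) * J $$ (a,b))"
      using b by (intro mat_mult_entry[OF Y_carrier J_carrier i]) auto
    also have "\<dots> = (\<Sum>a<n. Y $$ (i,a))" using b by (intro sum.cong refl) auto
    finally show "(Y * J) $$ (i,b) * Y $$ (b,j) = yv r p q i * Y $$ (b,j)" using Y_rowsum[OF i] by simp
  qed
  also have "\<dots> = (\<Sum>b<n. yv r p q i * Y $$ (j,b))"
  proof (intro sum.cong refl)
    fix b assume "b \<in> {..<n}"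
    then show "yv r p q i * Y $$ (b,j) = yv r p q i * Y $$ (j,b)" using Y_sym[of b j] j by simp
  qed
  also have "\<dots> = yv r p q i * (\<Sum>b<n. Y $$ (j,b))"
    by (rule sum_distrib_left[symmetric])
  also have "\<dots> = yyT n r p q $$ (i,j)" using i j by (simp add: Y_rowsum yyT_def)
  finally show "(Y * J * Y) $$ (i,j) = yyT n r p q $$ (i,j)" .
qed (auto simp: yyT_def)

lemma JYJ: "J * Y * J = gam r p q \<cdot>\<^sub>m J"
proof (rule eq_matI)
  fix i j assume "i < dim_row (gam r p q \<cdot>\<^sub>m J)" "j < dim_col (gam r p q \<cdot>\<^sub>m J)"
  then have i: "i < n" and j: "j < n" by auto
  have "(J * Y * J) $$ (i,j) = (\<Sum>b<n. (J * Y) $$ (i,b) * J $$ (b,j))"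
    by (rule mat_mult_entry[OF mult_carrier_mat[OF J_carrier Y_carrier] J_carrier i j])
  also have "\<dots> = (\<Sum>b<n. yv r p q b)"
  proof (intro sum.cong refl)
    fix b assume b: "b \<in> {..<n}"
    have "(J * Y) $$ (i,b) = (\<Sum>a<n. J $$ (i,a) * Y $$ (a,b))"
      using b by (intro mat_mult_entry[OF J_carrier Y_carrier i]) auto
    also have "\<dots> = (\<Sum>a<n. Y $$ (b,a))"
    proof (intro sum.cong refl)
      fix a assume "a \<in> {..<n}"
      then show "J $$ (i,a) * Y $$ (a,b) = Y $$ (b,a)" using Y_sym[of b a] b i by simp
    qed
    finally show "(J * Y) $$ (i,b) * J $$ (b,j) = yv r p q b" using Y_rowsum b j by simp
  qed
  also have "\<dots> = (gam r p q \<cdot>\<^sub>m J) $$ (i,j)" using i j by (simp add: gam_eq)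
  finally show "(J * Y * J) $$ (i,j) = (gam r p q \<cdot>\<^sub>m J) $$ (i,j)" .
qed auto

lemma Y_mult_expansion: assumes i: "i < n"
  shows "(\<Sum>j<n. Y $$ (i,j) * x j) = (\<Sum>k<r. sign_vec p q k i * (\<Sum>a<n. sign_vec p q k a * x a) / blk_size p q k)"
proof -
  have "(\<Sum>j<n. Y $$ (i,j) * x j) = (\<Sum>j<n. \<Sum>k<r. sign_vec p q k i / blk_size p q k * (sign_vec p q k j * x j))"
  proof (intro sum.cong refl)
    fix j assume j: "j \<in> {..<n}"
    have "Y $$ (i,j) * x j = (\<Sum>k<r. sign_vec p q k i * sign_vec p q k j / blk_size p q k * x j)"
      using j i by (simp add: Y_entry sum_distrib_right)
    also have "\<dots> = (\<Sum>k<r. sign_vec p q k i / blk_size p q k * (sign_vec p q k j * x j))"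
      by (intro sum.cong refl) simp
    finally show "Y $$ (i,j) * x j = \<dots>" .
  qed
  also have "\<dots> = (\<Sum>k<r. \<Sum>j<n. sign_vec p q k i / blk_size p q k * (sign_vec p q k j * x j))"
    by (rule sum.swap)
  also have "\<dots> = (\<Sum>k<r. sign_vec p q k i * (\<Sum>a<n. sign_vec p q k a * x a) / blk_size p q k)"
    by (intro sum.cong refl) (simp add: sum_distrib_left sum_divide_distrib)
  finally show ?thesis .
qed

lemma kernel_fixed_by_Y: assumes "qf n P x = 0" "i < n" shows "x i = (\<Sum>j<n. Y $$ (i,j) * x j)"
  using kernel_in_span[OF assms] Y_mult_expansion[OF assms(2)] by simp

lemma qf_Y: "qf n Y x = (\<Sum>k<r. (\<Sum>a<n. sign_vec p q k a * x a)^2 / blk_size p q k)"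
proof -
  have "qf n Y x = (\<Sum>i<n. \<Sum>j<n. \<Sum>k<r. (sign_vec p q k i * x i) * (sign_vec p q k j * x j) / blk_size p q k)"
    unfolding qf_def
  proof (intro sum.cong refl)
    fix i j assume i: "i \<in> {..<n}" and j: "j \<in> {..<n}"
    have "Y $$ (i,j) * x i * x j = (\<Sum>k<r. sign_vec p q k i * sign_vec p q k j / blk_size p q k * (x i * x j))"
      using i j by (simp add: Y_entry sum_distrib_right mult.assoc)
    also have "\<dots> = (\<Sum>k<r. (sign_vec p q k i * x i) * (sign_vec p q k j * x j) / blk_size p q k)"
      by (intro sum.cong refl) simp
    finally show "Y $$ (i,j) * x i * x j = \<dots>" .
  qed
  also have "\<dots> = (\<Sum>i<n. \<Sum>k<r. \<Sum>j<n. (sign_vec p q k i * x i) * (sign_vec p q k j * x j) / blk_size p q k)"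
    by (rule sum.cong[OF refl], rule sum.swap)
  also have "\<dots> = (\<Sum>k<r. \<Sum>i<n. \<Sum>j<n. (sign_vec p q k i * x i) * (sign_vec p q k j * x j) / blk_size p q k)"
    by (rule sum.swap)
  also have "\<dots> = (\<Sum>k<r. (\<Sum>i<n. \<Sum>j<n. (sign_vec p q k i * x i) * (sign_vec p q k j * x j)) / blk_size p q k)"
    by (intro sum.cong refl) (simp add: sum_divide_distrib)
  also have "\<dots> = (\<Sum>k<r. (\<Sum>a<n. sign_vec p q k a * x a)^2 / blk_size p q k)"
    by (simp add: power2_eq_square sum_product)
  finally show ?thesis .
qed

lemma qf_Y_nonneg: "qf n Y x \<ge> 0"
  unfolding qf_Y using blk_size_pos by (intro sum_nonneg) (simp add: less_imp_le)

text \<open>P + Y is invertible: x^T (P + Y) x = 0 forces x into the kernel of P and orthogonal to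
  every u_k, so x = 0.\<close>
lemma P_plus_Y_invertible: "\<exists>Q. (P + Y) * Q = 1\<^sub>m n \<and> Q \<in> carrier_mat n n"
proof -
  have c: "P + Y \<in> carrier_mat n n" using P_carrier by simp
  have "\<exists>B. mat_inverse (P + Y) = Some B \<and> (P + Y) * B = 1\<^sub>m n \<and> B * (P + Y) = 1\<^sub>m n \<and> B \<in> carrier_mat n n"
  proof (rule inverse_if_trivial_kernel[OF c])
    fix x assume h: "\<And>i. i < n \<Longrightarrow> (\<Sum>j<n. (P + Y) $$ (i,j) * x j) = 0"
    have "qf n (P + Y) x = 0" unfolding qf_mult using h by simp
    then have s: "qf n P x + qf n Y x = 0" using qf_add[OF P_carrier Y_carrier] by simp
    have qP: "qf n P x = 0" and qY: "qf n Y x = 0" using s qf_P_nonneg[of x] qf_Y_nonneg[of x] by linarith+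
    have uz: "(\<Sum>a<n. sign_vec p q k a * x a) = 0" if k: "k < r" for k
    proof -
      have t: "\<forall>k\<in>{..<r}. 0 \<le> (\<Sum>a<n. sign_vec p q k a * x a)^2 / blk_size p q k"
        using blk_size_pos by (simp add: less_imp_le)
      have "(\<Sum>a<n. sign_vec p q k a * x a)^2 / blk_size p q k = 0"
        using qY[unfolded qf_Y] sum_nonneg_eq_0_iff[of "{..<r}" "\<lambda>k. (\<Sum>a<n. sign_vec p q k a * x a)^2 / blk_size p q k"] t k
        by auto
      then show ?thesis using blk_size_pos[OF k] by simp
    qed
    fix i assume i: "i < n"
    have "x i = (\<Sum>j<n. Y $$ (i,j) * x j)" by (rule kernel_fixed_by_Y[OF qP i])
    also have "\<dots> = 0" unfolding Y_mult_expansion[OF i] using uz by simp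
    finally show "x i = 0" .
  qed
  then show ?thesis by blast
qed

text \<open>If YM = Y, then 1 - M has no component in the kernel of P and so lies in the range of P.\<close>
lemma complement_in_range:
  assumes M: "M \<in> carrier_mat n n" and YM: "Y * M = Y"
  shows "\<exists>W. W \<in> carrier_mat n n \<and> P * W = 1\<^sub>m n - M"
proof -
  obtain Q where Q: "(P + Y) * Q = 1\<^sub>m n" "Q \<in> carrier_mat n n"
    using P_plus_Y_invertible by blast
  have A: "1\<^sub>m n - M \<in> carrier_mat n n" using M by (simp add: minus_carrier_mat)
  have "Y * (1\<^sub>m n - M) = Y * 1\<^sub>m n - Y * M"
    by (rule mult_minus_distrib_mat[OF Y_carrier one_carrier_mat M])
  then have "Y * (1\<^sub>m n - M) = 0\<^sub>m n n" using YM by simp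
  then have "P * (Q * (1\<^sub>m n - M)) = 1\<^sub>m n - M"
    by (rule solve_modulo_projection[OF P_carrier Y_carrier Q(2) A YP Y_idem Q(1)])
  then show ?thesis using Q(2) A by (meson mult_carrier_mat)
qed

text \<open>For \<alpha> > 0 and l, t \<ge> 0 the matrix \<alpha>I + lJ + tP is coercive with constant \<alpha>, so it is
  invertible and its inverse has entries bounded by 1/\<alpha>, uniformly in t.\<close>
lemma shifted_inverse_bounded:
  fixes \<alpha> l t :: real
  assumes \<alpha>: "\<alpha> > 0" and l: "l \<ge> 0" and t: "t \<ge> 0"
  defines "M \<equiv> \<alpha> \<cdot>\<^sub>m 1\<^sub>m n + l \<cdot>\<^sub>m J + t \<cdot>\<^sub>m P"
  shows "\<exists>B. mat_inverse M = Some B \<and> B * M = 1\<^sub>m n \<and> B \<in> carrier_mat n n \<and>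
           (\<forall>i<n. \<forall>j<n. \<bar>B $$ (i,j)\<bar> \<le> 1 / \<alpha>)"
proof -
  have cM: "M \<in> carrier_mat n n" unfolding M_def using P_carrier by simp
  have "qf n M x \<ge> \<alpha> * (\<Sum>i<n. (x i)^2)" for x
  proof -
    have "qf n M x = \<alpha> * (\<Sum>i<n. (x i)^2) + l * (\<Sum>i<n. x i)^2 + t * qf n P x"
      unfolding M_def using P_carrier by (simp add: qf_add qf_smult qf_one qf_J)
    moreover have "l * (\<Sum>i<n. x i)^2 \<ge> 0" using l by simp
    moreover have "t * qf n P x \<ge> 0" using t qf_P_nonneg by simp
    ultimately show ?thesis by linarith
  qed
  from coercive_inverse[OF cM \<alpha> this] show ?thesis by blast
qed

lemma eventually_bounded_inverse:
  fixes \<alpha> l :: real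
  assumes \<alpha>: "\<alpha> > 0" and l: "l \<ge> 0"
  shows "\<forall>\<^sub>F t in at_top. mat_inverse (\<alpha> \<cdot>\<^sub>m 1\<^sub>m n + l \<cdot>\<^sub>m J + t \<cdot>\<^sub>m P) \<noteq> None \<and>
     the (mat_inverse (\<alpha> \<cdot>\<^sub>m 1\<^sub>m n + l \<cdot>\<^sub>m J + t \<cdot>\<^sub>m P)) \<in> carrier_mat n n \<and>
     the (mat_inverse (\<alpha> \<cdot>\<^sub>m 1\<^sub>m n + l \<cdot>\<^sub>m J + t \<cdot>\<^sub>m P)) * (\<alpha> \<cdot>\<^sub>m 1\<^sub>m n + l \<cdot>\<^sub>m J + t \<cdot>\<^sub>m P) = 1\<^sub>m n \<and>
     (\<forall>i<n. \<forall>j<n. \<bar>the (mat_inverse (\<alpha> \<cdot>\<^sub>m 1\<^sub>m n + l \<cdot>\<^sub>m J + t \<cdot>\<^sub>m P)) $$ (i,j)\<bar> \<le> 1 / \<alpha>)"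
  using eventually_ge_at_top[of "0::real"]
proof eventually_elim
  case (elim t)
  from shifted_inverse_bounded[OF \<alpha> l elim] show ?case by force
qed

end

theorem proposition4p8:
  fixes n r :: nat and l \<alpha> :: real and P :: "real mat" and p q :: "nat \<Rightarrow> nat"
  assumes "n \<ge> 3" and "l > 0" and "\<alpha> \<ge> (real n - 2) * l"
    and "signless_laplacian n P"
    and "bip_labelled n P r p q"
  defines "S \<equiv> \<alpha> \<cdot>\<^sub>m 1\<^sub>m n + l \<cdot>\<^sub>m mat n n (\<lambda>_. 1)"
    and "N \<equiv> (1 / \<alpha>) \<cdot>\<^sub>m Ymat n r p q
              - (l / (\<alpha> * (\<alpha> + l * gam r p q))) \<cdot>\<^sub>m yyT n r p q"
  shows "(\<forall>\<^sub>F t in at_top. mat_inverse (S + t \<cdot>\<^sub>m P) \<noteq> None) \<and>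
         (\<forall>i<n. \<forall>j<n. ((\<lambda>t. the (mat_inverse (S + t \<cdot>\<^sub>m P)) $$ (i,j))
                        \<longlongrightarrow> N $$ (i,j)) at_top)"
proof -
  interpret signless_setting n r P p q using assms(4,5) by unfold_locales
  have "(real n - 2) * l \<ge> 1 * l" using assms(1,2) by (intro mult_right_mono) auto
  then have \<alpha>: "\<alpha> > 0" using assms(2,3) by linarith
  have den: "\<alpha> + l * gam r p q \<noteq> 0"
    using \<alpha> assms(2) gam_nonneg by (smt (verit) mult_nonneg_nonneg)
  have N_eq: "N = (1 / \<alpha>) \<cdot>\<^sub>m Y - (l / (\<alpha> * (\<alpha> + l * gam r p q))) \<cdot>\<^sub>m (Y * J * Y)"
    unfolding N_def YJY ..
  have S: "S \<in> carrier_mat n n" and N: "N \<in> carrier_mat n n" unfolding S_def N_eq by auto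
  have PN: "P * N = 0\<^sub>m n n"
    unfolding N_eq by (rule candidate_in_kernel[OF P_carrier Y_carrier J_carrier PY])
  have "Y * (S * N) = Y" unfolding S_def N_eq
    by (rule projection_fixes_candidate[OF Y_carrier J_carrier Y_idem JYJ _ den]) (use \<alpha> in simp)
  then obtain W where W: "W \<in> carrier_mat n n" "P * W = 1\<^sub>m n - S * N"
    using complement_in_range[OF mult_carrier_mat[OF S N]] by blast
  have ev: "\<forall>\<^sub>F t in at_top. mat_inverse (S + t \<cdot>\<^sub>m P) \<noteq> None \<and>
      the (mat_inverse (S + t \<cdot>\<^sub>m P)) \<in> carrier_mat n n \<and>
      the (mat_inverse (S + t \<cdot>\<^sub>m P)) * (S + t \<cdot>\<^sub>m P) = 1\<^sub>m n \<and>
      (\<forall>i<n. \<forall>j<n. \<bar>the (mat_inverse (S + t \<cdot>\<^sub>m P)) $$ (i,j)\<bar> \<le> 1 / \<alpha>)"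
    unfolding S_def using eventually_bounded_inverse[OF \<alpha>, of l] assms(2) by simp
  then have "\<forall>\<^sub>F t in at_top. the (mat_inverse (S + t \<cdot>\<^sub>m P)) \<in> carrier_mat n n \<and>
      the (mat_inverse (S + t \<cdot>\<^sub>m P)) * (S + t \<cdot>\<^sub>m P) = 1\<^sub>m n \<and>
      (\<forall>i<n. \<forall>j<n. \<bar>the (mat_inverse (S + t \<cdot>\<^sub>m P)) $$ (i,j)\<bar> \<le> 1 / \<alpha>)"
    by (rule eventually_mono) blast
  from resolvent_limit[OF S P_carrier N W(1) PN W(2) this]
  have "\<forall>i<n. \<forall>j<n. ((\<lambda>t. the (mat_inverse (S + t \<cdot>\<^sub>m P)) $$ (i,j)) \<longlongrightarrow> N $$ (i,j)) at_top"
    by blast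
  moreover from ev have "\<forall>\<^sub>F t in at_top. mat_inverse (S + t \<cdot>\<^sub>m P) \<noteq> None"
    by (rule eventually_mono) blast
  ultimately show ?thesis by blast
qed

end
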